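(* Let $\Omega=\{1,\dots,m\}^{\mathbb{N}}$ with shift $\sigma$, let $\mathcal{M}$ be the set of Borel probabilities on $\Omega$ with the Monge–Kantorovich metric $d_{MK}$, and let $\mathfrak{T}:\mathcal{M}\to\mathcal{M}$ be the push-forward map $\mathfrak{T}(\mu)(E)=\mu(\sigma^{-1}(E))$. Then the set of periodic points of $\mathfrak{T}$ (those $\mu\in\mathcal{M}$ with $\mathfrak{T}^r(\mu)=\mu$ for some $r\ge1$) is dense in $\mathcal{M}$.
   Context: $\Omega$ carries the metric $d_\Omega(\alpha,\beta)=2^{-k}$ with $k=\min\{i:\alpha_i\neq\beta_i\}$ (and $0$ if $\alpha=\beta$); $d_{MK}(\mu,\nu)=\sup\{\int f\,d\mu-\int f\,d\nu : f \text{ 1-Lipschitz}\}$. $\sigma(x_1,x_2,\dots)=(x_2,x_3,\dots)$. *)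

theory Defs
  imports "HOL-Probability.Probability"
begin

text \<open>The full shift on m symbols: sequences x :: nat \<Rightarrow> nat with values in {1..m}.
  Sequence positions are indexed from 0 here; position i corresponds to the paper's index i+1.\<close>

definition Omega :: "nat \<Rightarrow> (nat \<Rightarrow> nat) set" where
  "Omega m = {x. \<forall>i. x i \<in> {1..m}}"

definition dOmega :: "(nat \<Rightarrow> nat) \<Rightarrow> (nat \<Rightarrow> nat) \<Rightarrow> real" where
  "dOmega a b = (if a = b then 0 else (1/2) ^ Suc (LEAST i. a i \<noteq> b i))"

definition Omega_open :: "nat \<Rightarrow> (nat \<Rightarrow> nat) set \<Rightarrow> bool" where
  "Omega_open m U \<longleftrightarrow> U \<subseteq> Omega m \<and>
     (\<forall>x\<in>U. \<exists>e>0. \<forall>y\<in>Omega m. dOmega x y < e \<longrightarrow> y \<in> U)"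

definition Omega_borel :: "nat \<Rightarrow> (nat \<Rightarrow> nat) measure" where
  "Omega_borel m = sigma (Omega m) {U. Omega_open m U}"

definition Mprob :: "nat \<Rightarrow> (nat \<Rightarrow> nat) measure set" where
  "Mprob m = space (prob_algebra (Omega_borel m))"

definition Lip1 :: "nat \<Rightarrow> ((nat \<Rightarrow> nat) \<Rightarrow> real) set" where
  "Lip1 m = {f. \<forall>x\<in>Omega m. \<forall>y\<in>Omega m. \<bar>f x - f y\<bar> \<le> dOmega x y}"

definition dMK :: "nat \<Rightarrow> (nat \<Rightarrow> nat) measure \<Rightarrow> (nat \<Rightarrow> nat) measure \<Rightarrow> real" where
  "dMK m \<mu> \<nu> = (SUP f\<in>Lip1 m. (\<integral>x. f x \<partial>\<mu>) - (\<integral>x. f x \<partial>\<nu>))"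

definition shift :: "(nat \<Rightarrow> nat) \<Rightarrow> (nat \<Rightarrow> nat)" where
  "shift x = (\<lambda>i. x (Suc i))"

definition Tpush :: "nat \<Rightarrow> (nat \<Rightarrow> nat) measure \<Rightarrow> (nat \<Rightarrow> nat) measure" where
  "Tpush m \<mu> = distr \<mu> (Omega_borel m) shift"

end

theory Submission
  imports Defs
begin

text \<open>Periodizing a sequence with period n, x \<mapsto> (x 0, ..., x (n-1), x 0, ..., x (n-1), ...),
  is a measurable self-map of Omega that moves every point by less than 2^-n and whose image
  consists of points of period n for the shift. Pushing \<mu> forward along it therefore gives a
  measure fixed by the n-th iterate of the push-forward map, and any 1-Lipschitz integrand changes
  pointwise by less than 2^-n, so the new measure is 2^-n-close to \<mu> in the Monge--Kantorovich
  metric.\<close>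

lemma dOmega_less_half_power_iff:
  "dOmega x y < (1/2)^k \<longleftrightarrow> (\<forall>i<k. x i = y i)"
proof (cases "x = y")
  case True
  then show ?thesis by (simp add: dOmega_def)
next
  case False
  define j where "j = (LEAST i. x i \<noteq> y i)"
  have "\<exists>i. x i \<noteq> y i"
    using False by auto
  then have "x j \<noteq> y j"
    unfolding j_def by (rule LeastI_ex)
  moreover have "\<And>i. i < j \<Longrightarrow> x i = y i"
    unfolding j_def using not_less_Least by blast
  ultimately have "k < Suc j \<longleftrightarrow> (\<forall>i<k. x i = y i)"
    by (metis less_Suc_eq_le not_le order_less_le_trans)
  moreover have "(1/2::real)^Suc j < (1/2)^k \<longleftrightarrow> k < Suc j"
    by (rule power_strict_decreasing_iff) auto
  ultimately show ?thesis
    using False by (simp add: dOmega_def j_def del: power_Suc)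
qed

lemma dOmega_le_1: "dOmega x y \<le> 1"
  by (simp add: dOmega_def power_le_one del: power_Suc)

lemma Omega_open_iff_cylinder:
  "Omega_open m U \<longleftrightarrow> U \<subseteq> Omega m \<and>
     (\<forall>x\<in>U. \<exists>k. \<forall>y\<in>Omega m. (\<forall>i<k. x i = y i) \<longrightarrow> y \<in> U)"
proof -
  have "(\<exists>e>0. \<forall>y\<in>Omega m. dOmega x y < e \<longrightarrow> y \<in> U) \<longleftrightarrow>
        (\<exists>k. \<forall>y\<in>Omega m. (\<forall>i<k. x i = y i) \<longrightarrow> y \<in> U)" for x
  proof
    assume "\<exists>e>0. \<forall>y\<in>Omega m. dOmega x y < e \<longrightarrow> y \<in> U"
    then obtain e where "e > 0" and e: "\<forall>y\<in>Omega m. dOmega x y < e \<longrightarrow> y \<in> U"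
      by blast
    obtain k where k: "(1/2::real)^k < e"
      using real_arch_pow_inv[of e "1/2"] \<open>e > 0\<close> by auto
    have "y \<in> U" if "y \<in> Omega m" "\<forall>i<k. x i = y i" for y
      using e k that dOmega_less_half_power_iff[of x y k] by auto
    then show "\<exists>k. \<forall>y\<in>Omega m. (\<forall>i<k. x i = y i) \<longrightarrow> y \<in> U"
      by blast
  next
    assume "\<exists>k. \<forall>y\<in>Omega m. (\<forall>i<k. x i = y i) \<longrightarrow> y \<in> U"
    then obtain k where "\<forall>y\<in>Omega m. (\<forall>i<k. x i = y i) \<longrightarrow> y \<in> U"
      by blast
    then show "\<exists>e>0. \<forall>y\<in>Omega m. dOmega x y < e \<longrightarrow> y \<in> U"
      using dOmega_less_half_power_iff[of x _ k] by (intro exI[of _ "(1/2)^k"]) auto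
  qed
  then show ?thesis
    unfolding Omega_open_def by blast
qed

lemma Omega_open_subset_Pow: "{U. Omega_open m U} \<subseteq> Pow (Omega m)"
  by (auto simp: Omega_open_def)

lemma space_Omega_borel [simp]: "space (Omega_borel m) = Omega m"
  unfolding Omega_borel_def by (rule space_measure_of[OF Omega_open_subset_Pow])

lemma Omega_open_in_sets: "Omega_open m U \<Longrightarrow> U \<in> sets (Omega_borel m)"
  unfolding Omega_borel_def sets_measure_of[OF Omega_open_subset_Pow]
  by (rule sigma_sets.Basic) simp

lemma measurable_Omega_borelI:
  assumes into: "\<And>x. x \<in> Omega m \<Longrightarrow> h x \<in> Omega m"
    and prefix: "\<And>x k. x \<in> Omega m \<Longrightarrow>
      \<exists>k'. \<forall>y\<in>Omega m. (\<forall>i<k'. x i = y i) \<longrightarrow> (\<forall>i<k. h x i = h y i)"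
  shows "h \<in> measurable (Omega_borel m) (Omega_borel m)"
proof -
  have "h \<in> measurable (Omega_borel m) (measure_of (Omega m) {U. Omega_open m U} (\<lambda>_. 0))"
  proof (rule measurable_measure_of[OF Omega_open_subset_Pow])
    show "h \<in> space (Omega_borel m) \<rightarrow> Omega m"
      using into by simp
    fix U
    assume "U \<in> {U. Omega_open m U}"
    then have U: "Omega_open m U" by simp
    have "Omega_open m (h -` U \<inter> Omega m)"
      unfolding Omega_open_iff_cylinder
    proof (intro conjI ballI)
      fix x
      assume x: "x \<in> h -` U \<inter> Omega m"
      then obtain k where k: "\<forall>y\<in>Omega m. (\<forall>i<k. h x i = y i) \<longrightarrow> y \<in> U"
        using U into unfolding Omega_open_iff_cylinder by blast
      obtain k' where k': "\<forall>y\<in>Omega m. (\<forall>i<k'. x i = y i) \<longrightarrow> (\<forall>i<k. h x i = h y i)"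
        using prefix x by blast
      show "\<exists>k. \<forall>y\<in>Omega m. (\<forall>i<k. x i = y i) \<longrightarrow> y \<in> h -` U \<inter> Omega m"
        using k k' into by (intro exI[of _ k']) auto
    qed auto
    then show "h -` U \<inter> space (Omega_borel m) \<in> sets (Omega_borel m)"
      by (simp add: Omega_open_in_sets)
  qed
  then show ?thesis
    unfolding Omega_borel_def .
qed

lemma Lip1_borel_measurable:
  assumes f: "f \<in> Lip1 m"
  shows "f \<in> borel_measurable (Omega_borel m)"
proof (rule borel_measurableI)
  fix S :: "real set"
  assume S: "open S"
  have "Omega_open m (f -` S \<inter> Omega m)"
    unfolding Omega_open_def
  proof (intro conjI ballI)
    fix x
    assume x: "x \<in> f -` S \<inter> Omega m"
    then obtain e where e: "e > 0" "ball (f x) e \<subseteq> S"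
      using S open_contains_ball by blast
    have "f y \<in> ball (f x) e" if "y \<in> Omega m" "dOmega x y < e" for y
      using f x that unfolding Lip1_def by (fastforce simp: dist_real_def)
    with e show "\<exists>e>0. \<forall>y\<in>Omega m. dOmega x y < e \<longrightarrow> y \<in> f -` S \<inter> Omega m"
      by blast
  qed auto
  then show "f -` S \<inter> space (Omega_borel m) \<in> sets (Omega_borel m)"
    by (simp add: Omega_open_in_sets)
qed

lemma Lip1_bounded:
  assumes "f \<in> Lip1 m"
  obtains B where "\<And>x. x \<in> Omega m \<Longrightarrow> \<bar>f x\<bar> \<le> B"
proof -
  have "\<exists>B. \<forall>x\<in>Omega m. \<bar>f x\<bar> \<le> B"
  proof (cases "Omega m = {}")
    case False
    then obtain x0 where x0: "x0 \<in> Omega m" by blast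
    have "\<bar>f x\<bar> \<le> \<bar>f x0\<bar> + 1" if "x \<in> Omega m" for x
      using assms x0 that dOmega_le_1[of x x0] unfolding Lip1_def by force
    then show ?thesis by blast
  qed simp
  then obtain B where "\<forall>x\<in>Omega m. \<bar>f x\<bar> \<le> B" ..
  then show ?thesis
    by (intro that) blast
qed

lemma Lip1_integrable:
  assumes f: "f \<in> Lip1 m"
    and \<mu>: "finite_measure \<mu>" "sets \<mu> = sets (Omega_borel m)"
  shows "integrable \<mu> f"
proof -
  obtain B where "\<And>x. x \<in> Omega m \<Longrightarrow> \<bar>f x\<bar> \<le> B"
    using Lip1_bounded[OF f] by blast
  moreover have "f \<in> borel_measurable \<mu>"
    using Lip1_borel_measurable[OF f] measurable_cong_sets[OF \<mu>(2) refl] by blast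
  ultimately show ?thesis
    using sets_eq_imp_space_eq[OF \<mu>(2)]
    by (intro finite_measure.integrable_const_bound[OF \<mu>(1), where B=B]) auto
qed

lemma Mprob_iff: "\<mu> \<in> Mprob m \<longleftrightarrow> prob_space \<mu> \<and> sets \<mu> = sets (Omega_borel m)"
  by (auto simp: Mprob_def space_prob_algebra)

lemma measurable_from_Mprob:
  "\<mu> \<in> Mprob m \<Longrightarrow> g \<in> measurable (Omega_borel m) N \<Longrightarrow> g \<in> measurable \<mu> N"
  using measurable_cong_sets by (fastforce simp: Mprob_iff)

lemma distr_in_Mprob:
  assumes \<mu>: "\<mu> \<in> Mprob m" and g: "g \<in> measurable (Omega_borel m) (Omega_borel m)"
  shows "distr \<mu> (Omega_borel m) g \<in> Mprob m"
  using \<mu> measurable_from_Mprob[OF \<mu> g] by (simp add: Mprob_iff prob_space.prob_space_distr)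

lemma dMK_distr_le:
  assumes \<mu>: "\<mu> \<in> Mprob m"
    and g: "g \<in> measurable (Omega_borel m) (Omega_borel m)"
    and close: "\<And>x. x \<in> Omega m \<Longrightarrow> dOmega (g x) x \<le> \<delta>"
  shows "dMK m (distr \<mu> (Omega_borel m) g) \<mu> \<le> \<delta>"
  unfolding dMK_def
proof (rule cSUP_least)
  show "Lip1 m \<noteq> {}"
    by (auto simp: Lip1_def dOmega_def intro!: exI[of _ "\<lambda>_. 0"])
  fix f
  assume f: "f \<in> Lip1 m"
  have ps: "prob_space \<mu>" and sets_\<mu>: "sets \<mu> = sets (Omega_borel m)"
    using \<mu> by (auto simp: Mprob_iff)
  have space_\<mu>: "space \<mu> = Omega m"
    using sets_eq_imp_space_eq[OF sets_\<mu>] by simp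
  have g\<mu>: "g \<in> measurable \<mu> (Omega_borel m)"
    using \<mu> g by (rule measurable_from_Mprob)
  have g_into: "g x \<in> Omega m" if "x \<in> Omega m" for x
    using measurable_space[OF g] that by simp
  have "integrable (distr \<mu> (Omega_borel m) g) f"
    using f ps g\<mu>
    by (intro Lip1_integrable) (auto intro: prob_space.finite_measure prob_space.prob_space_distr)
  then have int_fg: "integrable \<mu> (\<lambda>x. f (g x))"
    using integrable_distr_eq[OF g\<mu> Lip1_borel_measurable[OF f]] by blast
  have int_f: "integrable \<mu> f"
    using f ps sets_\<mu> by (intro Lip1_integrable) (auto intro: prob_space.finite_measure)
  have "(\<integral>x. f x \<partial>distr \<mu> (Omega_borel m) g) - (\<integral>x. f x \<partial>\<mu>) = (\<integral>x. f (g x) - f x \<partial>\<mu>)"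
    using integral_distr[OF g\<mu> Lip1_borel_measurable[OF f]]
      Bochner_Integration.integral_diff[OF int_fg int_f]
    by simp
  also have "\<dots> \<le> (\<integral>x. \<delta> \<partial>\<mu>)"
  proof (rule integral_mono)
    fix x
    assume "x \<in> space \<mu>"
    then show "f (g x) - f x \<le> \<delta>"
      using f g_into close[of x] space_\<mu> unfolding Lip1_def by force
  qed (use int_fg int_f ps in
        \<open>auto intro: finite_measure.integrable_const prob_space.finite_measure\<close>)
  also have "\<dots> = \<delta>"
    using prob_space.prob_space[OF ps] by simp
  finally show "(\<integral>x. f x \<partial>distr \<mu> (Omega_borel m) g) - (\<integral>x. f x \<partial>\<mu>) \<le> \<delta>" .
qed

lemma funpow_shift: "(shift ^^ r) x = (\<lambda>i. x (i + r))"
  by (induction r arbitrary: x) (auto simp: shift_def)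

lemma shift_measurable: "shift \<in> measurable (Omega_borel m) (Omega_borel m)"
proof (rule measurable_Omega_borelI)
  fix x :: "nat \<Rightarrow> nat" and k
  show "\<exists>k'. \<forall>y\<in>Omega m. (\<forall>i<k'. x i = y i) \<longrightarrow> (\<forall>i<k. shift x i = shift y i)"
    by (intro exI[of _ "Suc k"]) (auto simp: shift_def)
qed (auto simp: Omega_def shift_def)

lemma funpow_shift_measurable: "shift ^^ r \<in> measurable (Omega_borel m) (Omega_borel m)"
  by (induction r) (auto intro!: measurable_compose[OF _ shift_measurable])

lemma funpow_Tpush_distr:
  assumes "h \<in> measurable M (Omega_borel m)"
  shows "(Tpush m ^^ r) (distr M (Omega_borel m) h) = distr M (Omega_borel m) ((shift ^^ r) \<circ> h)"
proof (induction r)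
  case 0
  then show ?case by simp
next
  case (Suc r)
  have "(shift ^^ r) \<circ> h \<in> measurable M (Omega_borel m)"
    using assms funpow_shift_measurable by (rule measurable_comp)
  have "(Tpush m ^^ Suc r) (distr M (Omega_borel m) h) =
      Tpush m (distr M (Omega_borel m) ((shift ^^ r) \<circ> h))"
    by (simp only: funpow.simps comp_apply[of "Tpush m"] Suc.IH)
  also have "\<dots> = distr M (Omega_borel m) (shift \<circ> ((shift ^^ r) \<circ> h))"
    unfolding Tpush_def using \<open>(shift ^^ r) \<circ> h \<in> _\<close> by (rule distr_distr[OF shift_measurable])
  also have "\<dots> = distr M (Omega_borel m) ((shift ^^ Suc r) \<circ> h)"
    by (simp only: funpow.simps comp_assoc)
  finally show ?case .
qed

definition periodize :: "nat \<Rightarrow> (nat \<Rightarrow> nat) \<Rightarrow> (nat \<Rightarrow> nat)" where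
  "periodize n x = (\<lambda>i. x (i mod n))"

lemma periodize_measurable: "periodize n \<in> measurable (Omega_borel m) (Omega_borel m)"
proof (rule measurable_Omega_borelI)
  fix x :: "nat \<Rightarrow> nat" and k
  show "\<exists>k'. \<forall>y\<in>Omega m. (\<forall>i<k'. x i = y i) \<longrightarrow> (\<forall>i<k. periodize n x i = periodize n y i)"
    by (intro exI[of _ k]) (auto simp: periodize_def intro: le_less_trans[OF mod_less_eq_dividend])
qed (auto simp: Omega_def periodize_def)

lemma funpow_shift_periodize: "(shift ^^ n) \<circ> periodize n = periodize n"
  by (auto simp: funpow_shift periodize_def fun_eq_iff)

lemma dOmega_periodize_less: "dOmega (periodize n x) x < (1/2)^n"
  unfolding dOmega_less_half_power_iff by (simp add: periodize_def)

theorem lemma2p11: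
  fixes m :: nat
  shows "\<forall>\<mu>\<in>Mprob m. \<forall>\<epsilon>>0. \<exists>\<nu>\<in>Mprob m.
           (\<exists>r\<ge>1. (Tpush m ^^ r) \<nu> = \<nu>) \<and> dMK m \<nu> \<mu> < \<epsilon>"
proof (intro ballI allI impI)
  fix \<mu> and \<epsilon> :: real
  assume \<mu>: "\<mu> \<in> Mprob m" and "\<epsilon> > 0"
  obtain n where "n \<ge> 1" and n: "(1/2::real)^n < \<epsilon>"
  proof -
    obtain k where "(1/2::real)^k < \<epsilon>"
      using real_arch_pow_inv[of \<epsilon> "1/2"] \<open>\<epsilon> > 0\<close> by auto
    moreover have "(1/2::real)^Suc k \<le> (1/2)^k"
      by (rule power_decreasing) auto
    ultimately show ?thesis
      using that[of "Suc k"] by linarith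
  qed
  define \<nu> where "\<nu> = distr \<mu> (Omega_borel m) (periodize n)"
  have "\<nu> \<in> Mprob m"
    unfolding \<nu>_def using \<mu> periodize_measurable by (rule distr_in_Mprob)
  moreover have "(Tpush m ^^ n) \<nu> = \<nu>"
    unfolding \<nu>_def
    using funpow_Tpush_distr[OF measurable_from_Mprob[OF \<mu> periodize_measurable]]
    by (simp add: funpow_shift_periodize)
  moreover have "dMK m \<nu> \<mu> \<le> (1/2)^n"
    unfolding \<nu>_def using \<mu> periodize_measurable
    by (rule dMK_distr_le) (use dOmega_periodize_less less_imp_le in blast)
  ultimately show "\<exists>\<nu>\<in>Mprob m. (\<exists>r\<ge>1. (Tpush m ^^ r) \<nu> = \<nu>) \<and> dMK m \<nu> \<mu> < \<epsilon>"
    using \<open>n \<ge> 1\<close> n by (intro bexI[of _ \<nu>] conjI exI[of _ n]) auto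
qed

end
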